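(* Let $I=(a..c)$ be a conserved interval of $\mathcal{P}$, and let $F$ and $F'$ be two sets of frontiers of $I$. Then $F\cup F'$ is also a set of frontiers of $I$.
   Context: Let $n\geq 2$ and let $\mathcal{P}=\{P_1,\ldots,P_K\}$ be signed permutations of $\{1,\ldots,n\}$: each $P_k$ is an ordering of $1,\ldots,n$ in which each element carries a sign $+$ or $-$. Assume $P_1=(+1,+2,\ldots,+n)$ and that every $P_k$ has first element $+1$ and last element $+n$. For integers $i\leq j$ write $(i..j)=\{i,\ldots,j\}$. A conserved interval of $\mathcal{P}$ is either a singleton, or a set $(a..c)$ with $a<c$ which (ignoring signs) occupies consecutive positions in every $P_k$ and which, in every $P_k$, has either $+a$ at its left end and $+c$ at its right end, or $-c$ at its left end and $-a$ at its right end. For a conserved interval $I=(a..c)$, a set $\{f_1,\ldots,f_k\}$ with $a=f_1<f_2<\cdots<f_k=c$ is a set of frontiers of $I$ if $(f_i..f_j)$ is a conserved interval for all $1\leq i<j\leq k$. *)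

theory Defs
  imports Main
begin

text \<open>A signed element is a pair (sign, value); sign True means +, False means -.
  A signed permutation of 1..n is a list of signed elements whose values are
  exactly 1..n, each occurring once.\<close>

type_synonym selem = "bool \<times> nat"

definition signed_perm :: "nat \<Rightarrow> selem list \<Rightarrow> bool" where
  "signed_perm n p \<longleftrightarrow> distinct (map snd p) \<and> set (map snd p) = {1..n}"

definition valid_family :: "nat \<Rightarrow> selem list list \<Rightarrow> bool" where
  "valid_family n PP \<longleftrightarrow> 2 \<le> n \<and> PP \<noteq> [] \<and>
     hd PP = map (\<lambda>i. (True, i)) [1..<n+1] \<and>
     (\<forall>p\<in>set PP. signed_perm n p \<and> hd p = (True, 1) \<and> last p = (True, n))"

definition conserved :: "nat \<Rightarrow> selem list list \<Rightarrow> nat \<Rightarrow> nat \<Rightarrow> bool" where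
  "conserved n PP a c \<longleftrightarrow>
     (a = c \<and> a \<in> {1..n}) \<or>
     (a < c \<and> (\<forall>p\<in>set PP. \<exists>i j. i < j \<and> j < length p \<and>
        set (map snd (take (j - i + 1) (drop i p))) = {a..c} \<and>
        ((p ! i = (True, a) \<and> p ! j = (True, c)) \<or>
         (p ! i = (False, c) \<and> p ! j = (False, a)))))"

definition frontiers :: "nat \<Rightarrow> selem list list \<Rightarrow> nat \<Rightarrow> nat \<Rightarrow> nat set \<Rightarrow> bool" where
  "frontiers n PP a c F \<longleftrightarrow> finite F \<and> a \<in> F \<and> c \<in> F \<and> F \<subseteq> {a..c} \<and>
     (\<forall>x\<in>F. \<forall>y\<in>F. x < y \<longrightarrow> conserved n PP x y)"

end

theory Submission
  imports Defs
begin

text \<open>Let \<open>x < y\<close> with \<open>x \<in> F\<close> and \<open>y \<in> F'\<close>. Unless \<open>x = a\<close> or \<open>y = c\<close> (when both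
  lie in one frontier set), the conserved intervals \<open>(a..y)\<close> and \<open>(x..c)\<close> overlap properly.
  In each permutation they occupy two overlapping blocks of positions; by injectivity the
  common positions carry exactly the values \<open>(x..y)\<close>, and the orientation of the block of
  \<open>(a..y)\<close> determines which end of the overlap is \<open>\<plusminus>x\<close> and which is \<open>\<plusminus>y\<close>, with matching signs.\<close>

definition conserved_at :: "selem list \<Rightarrow> nat \<Rightarrow> nat \<Rightarrow> nat \<Rightarrow> nat \<Rightarrow> bool" where
  "conserved_at p i j x y \<longleftrightarrow> i < j \<and> j < length p \<and>
     set (map snd (take (j - i + 1) (drop i p))) = {x..y} \<and>
     ((p ! i = (True, x) \<and> p ! j = (True, y)) \<or> (p ! i = (False, y) \<and> p ! j = (False, x)))"

lemma conserved_iff_conserved_at: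
  "x < y \<Longrightarrow> conserved n PP x y \<longleftrightarrow> (\<forall>p\<in>set PP. \<exists>i j. conserved_at p i j x y)"
  by (simp add: conserved_def conserved_at_def)

lemma set_map_snd_take_drop:
  assumes "i \<le> j" and "j < length p"
  shows "set (map snd (take (j - i + 1) (drop i p))) = (\<lambda>k. snd (p ! k)) ` {i..j}"
proof -
  have "set (take (j - i + 1) (drop i p)) = (!) (drop i p) ` {0..<j - i + 1}"
    using assms by (intro nth_image[symmetric]) simp
  also have "\<dots> = (!) p ` {i..j}"
  proof (intro equalityI image_subsetI)
    fix k assume "k \<in> {i..j}"
    then show "p ! k \<in> (!) (drop i p) ` {0..<j - i + 1}"
      using assms by (intro image_eqI[of _ _ "k - i"]) auto
  qed (use assms in auto)
  finally show ?thesis by (simp add: image_image)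
qed

lemma conserved_at_overlap:
  assumes dist: "distinct (map snd p)" and order: "f < x" "x < y" "y < g"
    and left: "conserved_at p i1 j1 f y" and right: "conserved_at p i2 j2 x g"
  shows "\<exists>i j. conserved_at p i j x y"
proof -
  define q where "q k = snd (p ! k)" for k
  have inj: "inj_on q {..<length p}"
    using dist by (auto simp: q_def inj_on_def distinct_conv_nth)
  have len: "j1 < length p" "j2 < length p"
    using left right by (simp_all add: conserved_at_def)
  then have pos1: "{i1..j1} \<subseteq> {..<length p}" and pos2: "{i2..j2} \<subseteq> {..<length p}"
    by auto
  have val1: "q ` {i1..j1} = {f..y}" and val2: "q ` {i2..j2} = {x..g}"
    using left right set_map_snd_take_drop[of i1 j1 p] set_map_snd_take_drop[of i2 j2 p]
    by (auto simp: conserved_at_def q_def)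
  have in1: "k \<in> {i1..j1} \<longleftrightarrow> q k \<in> {f..y}" if "k < length p" for k
    using inj_on_image_mem_iff[OF inj _ pos1, of k] that by (simp add: val1)
  have in2: "k \<in> {i2..j2} \<longleftrightarrow> q k \<in> {x..g}" if "k < length p" for k
    using inj_on_image_mem_iff[OF inj _ pos2, of k] that by (simp add: val2)
  have overlap: "q ` ({i1..j1} \<inter> {i2..j2}) = {x..y}"
    using inj_on_image_Int[OF inj pos1 pos2] val1 val2 order by auto
  have block: "conserved_at p i j x y"
    if "i < j" "{i1..j1} \<inter> {i2..j2} = {i..j}" "j < length p"
      "(p ! i = (True, x) \<and> p ! j = (True, y)) \<or> (p ! i = (False, y) \<and> p ! j = (False, x))"
    for i j
    using that overlap set_map_snd_take_drop[of i j p] by (simp add: conserved_at_def q_def)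
  from left consider
      "p ! i1 = (True, f)" "p ! j1 = (True, y)" | "p ! i1 = (False, y)" "p ! j1 = (False, f)"
    by (auto simp: conserved_at_def)
  then show ?thesis
  proof cases
    case 1
    then have "j1 \<in> {i2..j2}" "i1 \<notin> {i2..j2}"
      using in2[of i1] in2[of j1] left order by (auto simp: q_def conserved_at_def)
    then have "i1 < i2" "i2 \<le> j1" "j1 \<le> j2"
      using left by (auto simp: conserved_at_def)
    then have "q i2 \<in> {f..y}"
      using in1[of i2] left by (auto simp: conserved_at_def)
    then have "p ! i2 = (True, x)"
      using right order by (auto simp: conserved_at_def q_def)
    then have "i2 < j1"
      using 1 \<open>i2 \<le> j1\<close> order by (cases "i2 = j1") auto
    then show ?thesis
      using block[of i2 j1] 1 \<open>p ! i2 = (True, x)\<close> \<open>i1 < i2\<close> \<open>j1 \<le> j2\<close> len by auto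
  next
    case 2
    then have "i1 \<in> {i2..j2}" "j1 \<notin> {i2..j2}"
      using in2[of i1] in2[of j1] left order by (auto simp: q_def conserved_at_def)
    then have "i2 \<le> i1" "i1 \<le> j2" "j2 < j1"
      using left by (auto simp: conserved_at_def)
    then have "q j2 \<in> {f..y}"
      using in1[of j2] left by (auto simp: conserved_at_def)
    then have "p ! j2 = (False, x)"
      using right order by (auto simp: conserved_at_def q_def)
    then have "i1 < j2"
      using 2 \<open>i1 \<le> j2\<close> order by (cases "i1 = j2") auto
    then show ?thesis
      using block[of i1 j2] 2 \<open>p ! j2 = (False, x)\<close> \<open>i2 \<le> i1\<close> \<open>j2 < j1\<close> len by auto
  qed
qed

lemma conserved_overlap:
  assumes "valid_family n PP" and "f < x" "x < y" "y < g"
    and "conserved n PP f y" and "conserved n PP x g"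
  shows "conserved n PP x y"
proof -
  have "\<exists>i j. conserved_at p i j x y" if p: "p \<in> set PP" for p
  proof -
    have "distinct (map snd p)"
      using assms(1) p by (simp add: valid_family_def signed_perm_def)
    moreover obtain i1 j1 i2 j2 where "conserved_at p i1 j1 f y" "conserved_at p i2 j2 x g"
      using assms(2-6) p by (meson conserved_iff_conserved_at less_trans)
    ultimately show ?thesis
      using assms(2-4) conserved_at_overlap by blast
  qed
  then show ?thesis
    using assms(3) by (simp add: conserved_iff_conserved_at)
qed

lemma conserved_across_frontiers:
  assumes "valid_family n PP" and "frontiers n PP a c F" and "frontiers n PP a c F'"
    and "x \<in> F" "y \<in> F'" "x < y"
  shows "conserved n PP x y"
proof -
  have a: "a \<in> F'" "a \<le> x" and c: "c \<in> F" "y \<le> c"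
    using assms by (auto simp: frontiers_def)
  consider "x = a" | "y = c" | "a < x" "y < c"
    using a c by linarith
  then show ?thesis
  proof cases
    case 1
    then show ?thesis using assms(3,5,6) a by (simp add: frontiers_def)
  next
    case 2
    then show ?thesis using assms(2,4,6) c by (simp add: frontiers_def)
  next
    case 3
    have "conserved n PP a y" "conserved n PP x c"
      using assms 3 a c by (auto simp: frontiers_def)
    with 3 show ?thesis
      using conserved_overlap[OF assms(1)] assms(6) by blast
  qed
qed

theorem lemma7:
  fixes n :: nat and PP :: "selem list list" and a c :: nat and F F' :: "nat set"
  assumes "valid_family n PP"
    and "conserved n PP a c"
    and "frontiers n PP a c F"
    and "frontiers n PP a c F'"
  shows "frontiers n PP a c (F \<union> F')"
proof -
  have "conserved n PP x y" if "x \<in> F \<union> F'" "y \<in> F \<union> F'" "x < y" for x y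
    using that conserved_across_frontiers[OF assms(1,3,4)] conserved_across_frontiers[OF assms(1,4,3)]
      assms(3,4) by (auto simp: frontiers_def)
  then show ?thesis
    using assms(3,4) by (auto simp: frontiers_def)
qed

end
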